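(* Let $L$ be a factorial $W^*$-lattice of type $I_n$. Then $|Min(L)|=|\mathbb R|$.
   Context: Orthocomplemented lattice (paper's convention): a set $L$ with a partial order $\le$ in which every subset has a supremum and an infimum ($l\vee l'$, $l\wedge l'$ denote binary sup/inf, $0=\inf L$, $1=\sup L$), such that: (continuity) for every increasing net $(l_i)$ and every $l$, $\bigvee_i(l\wedge l_i)=l\wedge\bigvee_i l_i$, and for every decreasing net $(l_i)$ and every $l$, $\bigwedge_i(l\vee l_i)=l\vee\bigwedge_i l_i$; (modularity) $l\le l''$ implies $(l\vee l')\wedge l''=l\vee(l'\wedge l'')$ for all $l'$; together with a map $l\mapsto l^\perp$, also written $1-l$, satisfying $l^{\perp\perp}=l$, $l\vee l^\perp=1$, $l\wedge l^\perp=0$, and $l\le l'\Rightarrow l'^\perp\le l^\perp$. For $l'\le l$ put $l-l'=(1-l')\wedge l$. Write $\perp(l)=\{l'\in L: l'\le 1-l\}$; elements of $\perp(l)$ are orthogonal to $l$; a family is mutually orthogonal if any two distinct members are orthogonal. $l$ commutes with $l'$ if $l=(l\wedge l')\vee(l\wedge l'^\perp)$; $c(l)$ is the set of elements commuting with $l$; $C(L)=\bigcap_{l\in L}c(l)$. $L$ is factorial if $C(L)=\{0,1\}$ and abelian if $C(L)=L$. For $l\in L$, $L\wedge l=\{l'\in L:l'\le l\}$ is an orthocomplemented lattice with complement $l'\mapsto l-l'$; $l$ is an abelian element if $L\wedge l$ is abelian. $L$ is an R-lattice if $C(L\wedge l)=\{c\wedge l: c\in C(L)\}$ for every $l\in L$.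 An element $l\ne 0$ is minimal if for every $l'\in L$ either $l\wedge l'=0$ or $l\wedge l'=l$; $Min(L)$ is the set of minimal elements and $Min(l)=\{m\in Min(L): m\le l\}$. Regular equivalence relation: for an equivalence relation $\sim$ on $L$ write $l\le_\sim l'$ if there is $l''\le l'$ with $l\sim l''$. $\sim$ is regular if: (1) $l\sim 0\iff l=0$; (2) $l\ge l'$ and $l\le_\sim l'$ imply $l\sim l'$; (3) for all $l,l'$, $l\le_\sim l'$ or $l'\le_\sim l$; (4) if $(l_i)$, $(l_i')$ are families of mutually orthogonal elements with $l_i\sim l_i'$ for all $i$, then $\bigvee_i l_i\sim\bigvee_i l_i'$; (5) $l'\le l$ and $l'\sim l$ imply $l'=l$. A family $(l_i)_{i\in I}$ is independent if for every partition $\{J,K\}$ of $I$, $\bigvee_{i\in J}l_i\wedge\bigvee_{i\in K}l_i=0$. A $\sim$-compatible dimension function is a map $D:L\to[0,1]$ with $D(0)=0$, $D(1)=1$, $D(l\vee l')+D(l\wedge l')=D(l)+D(l')$, $D(l)=D(l')\iff l\sim l'$, $D(l)\le D(l')\iff l\le_\sim l'$, and $D(\bigvee_i l_i)=\sum_i D(l_i)$ for every finite or countable independent family. A factorial R-lattice $L$ is of type $I_n$ if it carries a regular equivalence relation $\sim$ and a $\sim$-compatible dimension function $D$ with $D(L)=\{0,\frac1n,\dots,\frac{n-1}{n},1\}$. A factorial $W^*$-lattice of type $I_n$ is a factorial R-lattice of type $I_n$ whose cardinality equals that of $\mathbb R$. *)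

theory Defs
  imports "HOL-Analysis.Infinite_Sum" "HOL-Library.Equipollence"
begin

unbundle lattice_syntax

text \<open>The lattice L is the whole carrier of a type 'a of class complete_lattice
  (so every subset has a supremum Sup and infimum Inf; bot = 0, top = 1).\<close>

definition directed_set :: "'a::complete_lattice set \<Rightarrow> bool" where
  "directed_set S \<longleftrightarrow> S \<noteq> {} \<and> (\<forall>x\<in>S. \<forall>y\<in>S. \<exists>z\<in>S. x \<le> z \<and> y \<le> z)"

definition filtered_set :: "'a::complete_lattice set \<Rightarrow> bool" where
  "filtered_set S \<longleftrightarrow> S \<noteq> {} \<and> (\<forall>x\<in>S. \<forall>y\<in>S. \<exists>z\<in>S. z \<le> x \<and> z \<le> y)"

text \<open>Increasing (decreasing) nets are represented by their
  ranges, which are exactly the directed (filtered) subsets.\<close>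
definition ortho_lattice :: "('a::complete_lattice \<Rightarrow> 'a) \<Rightarrow> bool" where
  "ortho_lattice perp \<longleftrightarrow>
     (\<forall>(S::'a set) l. directed_set S \<longrightarrow> Sup ((\<lambda>s. l \<sqinter> s) ` S) = l \<sqinter> Sup S) \<and>
     (\<forall>(S::'a set) l. filtered_set S \<longrightarrow> Inf ((\<lambda>s. l \<squnion> s) ` S) = l \<squnion> Inf S) \<and>
     (\<forall>(l::'a) l' l''. l \<le> l'' \<longrightarrow> (l \<squnion> l') \<sqinter> l'' = l \<squnion> (l' \<sqinter> l'')) \<and>
     (\<forall>l. perp (perp l) = l) \<and>
     (\<forall>l. l \<squnion> perp l = top) \<and>
     (\<forall>l. l \<sqinter> perp l = bot) \<and>
     (\<forall>l l'. l \<le> l' \<longrightarrow> perp l' \<le> perp l)"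

definition ominus :: "('a::complete_lattice \<Rightarrow> 'a) \<Rightarrow> 'a \<Rightarrow> 'a \<Rightarrow> 'a" where
  "ominus perp l l' = perp l' \<sqinter> l"

definition commutes :: "('a::complete_lattice \<Rightarrow> 'a) \<Rightarrow> 'a \<Rightarrow> 'a \<Rightarrow> bool" where
  "commutes perp a b \<longleftrightarrow> a = (a \<sqinter> b) \<squnion> (a \<sqinter> perp b)"

definition commutant :: "('a::complete_lattice \<Rightarrow> 'a) \<Rightarrow> 'a \<Rightarrow> 'a set" where
  "commutant perp l = {l'. commutes perp l' l}"

definition centre :: "('a::complete_lattice \<Rightarrow> 'a) \<Rightarrow> 'a set" where
  "centre perp = (\<Inter>l. commutant perp l)"

text \<open>Centre of the sublattice L \<sqinter> u = {l. l \<le> u}, whose complement is l \<mapsto> u - l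
  and whose lattice operations are those of L.\<close>
definition centre_below :: "('a::complete_lattice \<Rightarrow> 'a) \<Rightarrow> 'a \<Rightarrow> 'a set" where
  "centre_below perp u =
     (\<Inter>l\<in>{l. l \<le> u}. {l'. l' \<le> u \<and> l' = (l' \<sqinter> l) \<squnion> (l' \<sqinter> ominus perp u l)})"

definition factorial :: "('a::complete_lattice \<Rightarrow> 'a) \<Rightarrow> bool" where
  "factorial perp \<longleftrightarrow> centre perp = {bot, top}"

definition R_lattice :: "('a::complete_lattice \<Rightarrow> 'a) \<Rightarrow> bool" where
  "R_lattice perp \<longleftrightarrow> ortho_lattice perp \<and>
     (\<forall>l. centre_below perp l = (\<lambda>c. c \<sqinter> l) ` centre perp)"

definition minimal_elems :: "'a::complete_lattice set" where
  "minimal_elems = {l. l \<noteq> bot \<and> (\<forall>l'. l \<sqinter> l' = bot \<or> l \<sqinter> l' = l)}"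

definition le_sim :: "('a::complete_lattice \<Rightarrow> 'a \<Rightarrow> bool) \<Rightarrow> 'a \<Rightarrow> 'a \<Rightarrow> bool" where
  "le_sim sim l l' \<longleftrightarrow> (\<exists>l''. l'' \<le> l' \<and> sim l l'')"

definition mutually_orth :: "('a::complete_lattice \<Rightarrow> 'a) \<Rightarrow> ('i \<Rightarrow> 'a) \<Rightarrow> 'i set \<Rightarrow> bool" where
  "mutually_orth perp f I \<longleftrightarrow> (\<forall>i\<in>I. \<forall>j\<in>I. i \<noteq> j \<longrightarrow> f i \<le> perp (f j))"

text \<open>Regular equivalence relation. Families in (4) are indexed by subsets of the
  lattice's own type.\<close>
definition regular_equiv :: "('a::complete_lattice \<Rightarrow> 'a) \<Rightarrow> ('a \<Rightarrow> 'a \<Rightarrow> bool) \<Rightarrow> bool" where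
  "regular_equiv perp sim \<longleftrightarrow> equivp sim \<and>
     (\<forall>l. sim l bot \<longleftrightarrow> l = bot) \<and>
     (\<forall>l l'. l' \<le> l \<and> le_sim sim l l' \<longrightarrow> sim l l') \<and>
     (\<forall>l l'. le_sim sim l l' \<or> le_sim sim l' l) \<and>
     (\<forall>(I::'a set) f g. mutually_orth perp f I \<and> mutually_orth perp g I \<and>
          (\<forall>i\<in>I. sim (f i) (g i)) \<longrightarrow> sim (Sup (f ` I)) (Sup (g ` I))) \<and>
     (\<forall>l l'. l' \<le> l \<and> sim l' l \<longrightarrow> l' = l)"

definition independent_family :: "('i \<Rightarrow> 'a::complete_lattice) \<Rightarrow> 'i set \<Rightarrow> bool" where
  "independent_family f I \<longleftrightarrow>
     (\<forall>J K. J \<union> K = I \<and> J \<inter> K = {} \<longrightarrow> Sup (f ` J) \<sqinter> Sup (f ` K) = bot)"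

text \<open>sim-compatible dimension function; finite or countable families are indexed by
  subsets of nat.\<close>
definition dimension_function ::
    "('a::complete_lattice \<Rightarrow> 'a \<Rightarrow> bool) \<Rightarrow> ('a \<Rightarrow> real) \<Rightarrow> bool" where
  "dimension_function sim D \<longleftrightarrow>
     (\<forall>l. 0 \<le> D l \<and> D l \<le> 1) \<and> D bot = 0 \<and> D top = 1 \<and>
     (\<forall>l l'. D (l \<squnion> l') + D (l \<sqinter> l') = D l + D l') \<and>
     (\<forall>l l'. D l = D l' \<longleftrightarrow> sim l l') \<and>
     (\<forall>l l'. D l \<le> D l' \<longleftrightarrow> le_sim sim l l') \<and>
     (\<forall>(I::nat set) f. independent_family f I \<longrightarrow>
          ((\<lambda>i. D (f i)) has_sum D (Sup (f ` I))) I)"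

definition factorial_R_lattice_type_I :: "('a::complete_lattice \<Rightarrow> 'a) \<Rightarrow> nat \<Rightarrow> bool" where
  "factorial_R_lattice_type_I perp n \<longleftrightarrow>
     R_lattice perp \<and> factorial perp \<and> n \<ge> 1 \<and>
     (\<exists>sim D. regular_equiv perp sim \<and> dimension_function sim D \<and>
        range D = {real k / real n | k. k \<le> n})"

definition factorial_W_lattice_type_I :: "('a::complete_lattice \<Rightarrow> 'a) \<Rightarrow> nat \<Rightarrow> bool" where
  "factorial_W_lattice_type_I perp n \<longleftrightarrow>
     factorial_R_lattice_type_I perp n \<and> (UNIV :: 'a set) \<approx> (UNIV :: real set)"

end

theory Submission
  imports Defs
begin

(* In a factorial W*-lattice L of type I_n every element is the join of
   finitely many minimal elements (atoms); hence L is covered by the image of the set of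
   finite subsets of Min(L) under Sup.  Since L has the cardinality of the reals it is
   infinite, which forces Min(L) to be infinite, and for an infinite set M the finite
   subsets of M are no more numerous than M (they are coded by finite lists, and
   |M x M| = |M|).  Thus |L| <= |Min(L)| <= |L| = |R|.

   The decomposition into atoms needs only two lattice-theoretic facts:
   (a) relative complements exist (a consequence of modularity and orthocomplementation),
   (b) the lattice has no infinite strictly descending chains.  Fact (b) holds because the
   dimension function D is strictly monotone (by axiom (5) of a regular equivalence) and
   takes only the finitely many values 0, 1/n, ..., 1. *)

lemma ortho_relative_complement:
  fixes perp :: "'a::complete_lattice \<Rightarrow> 'a"
  assumes ol: "ortho_lattice perp" and "x \<le> l"
  shows "x \<squnion> (perp x \<sqinter> l) = l" and "x \<sqinter> (perp x \<sqinter> l) = bot"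
proof -
  have modular: "\<forall>(a::'a) b c. a \<le> c \<longrightarrow> (a \<squnion> b) \<sqinter> c = a \<squnion> (b \<sqinter> c)"
    using ol unfolding ortho_lattice_def by (elim conjE) assumption
  have join_perp: "\<forall>a. a \<squnion> perp a = top"
    using ol unfolding ortho_lattice_def by (elim conjE) assumption
  have meet_perp: "\<forall>a. a \<sqinter> perp a = bot"
    using ol unfolding ortho_lattice_def by (elim conjE) assumption
  show "x \<squnion> (perp x \<sqinter> l) = l"
    using modular join_perp \<open>x \<le> l\<close> by (metis inf_top_left)
  have "x \<sqinter> (perp x \<sqinter> l) \<le> x \<sqinter> perp x"
    by (meson inf_le1 inf_le2 le_inf_iff order_trans)
  then show "x \<sqinter> (perp x \<sqinter> l) = bot"
    using meet_perp by (simp add: bot_unique)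
qed

text \<open>Induction along \<open><\<close>: a non-zero non-atom \<open>l\<close> splits as the join of two
  strictly smaller complementary pieces.\<close>
lemma finite_join_of_minimal_elems:
  fixes l :: "'a::complete_lattice"
  assumes rel_compl: "\<And>x l :: 'a. x \<le> l \<Longrightarrow> \<exists>y. x \<squnion> y = l \<and> x \<sqinter> y = bot"
    and dcc: "wfp ((<) :: 'a \<Rightarrow> 'a \<Rightarrow> bool)"
  shows "\<exists>F. finite F \<and> F \<subseteq> minimal_elems \<and> Sup F = l"
  using dcc
proof (induction l rule: wfp_induct_rule)
  case (less l)
  consider "l = bot" | "l \<in> minimal_elems" | "l \<noteq> bot" "l \<notin> minimal_elems"
    by blast
  then show ?case
  proof cases
    case 1
    then show ?thesis by (intro exI[of _ "{}"]) simp
  next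
    case 2
    then show ?thesis by (intro exI[of _ "{l}"]) simp
  next
    case 3
    then obtain l' where "l \<sqinter> l' \<noteq> bot" "l \<sqinter> l' \<noteq> l"
      unfolding minimal_elems_def by blast
    define x where "x = l \<sqinter> l'"
    have x: "x \<noteq> bot" "x < l"
      using \<open>l \<sqinter> l' \<noteq> bot\<close> \<open>l \<sqinter> l' \<noteq> l\<close> by (auto simp: x_def less_le)
    obtain y where y: "x \<squnion> y = l" "x \<sqinter> y = bot"
      using rel_compl[of x l] x(2) by (auto simp: less_le)
    have "y < l"
    proof -
      have "y \<noteq> l"
        using x y by (metis inf.absorb1 less_le)
      then show ?thesis using y(1) by (auto simp: less_le)
    qed
    obtain Fx where Fx: "finite Fx" "Fx \<subseteq> minimal_elems" "Sup Fx = x"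
      using less.IH[OF \<open>x < l\<close>] by blast
    obtain Fy where Fy: "finite Fy" "Fy \<subseteq> minimal_elems" "Sup Fy = y"
      using less.IH[OF \<open>y < l\<close>] by blast
    have "Sup (Fx \<union> Fy) = l"
      using Fx Fy y by (simp add: Sup_union_distrib)
    then show ?thesis
      using Fx Fy by (intro exI[of _ "Fx \<union> Fy"]) auto
  qed
qed

text \<open>A compatible dimension function is strictly monotone: it is monotone because
  \<open>x \<le> l\<close> gives \<open>x \<le>\<^sub>\<sim> l\<close>, and \<open>D x = D l\<close> would mean
  \<open>x \<sim> l\<close>, which axiom (5) of a regular equivalence excludes for \<open>x < l\<close>.\<close>
lemma dimension_strict_mono:
  fixes perp :: "'a::complete_lattice \<Rightarrow> 'a"
  assumes re: "regular_equiv perp sim" and dim: "dimension_function sim D" and "x < l"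
  shows "D x < D l"
proof -
  have "equivp sim"
    using re unfolding regular_equiv_def by (elim conjE) assumption
  have antisym: "\<forall>l l'. l' \<le> l \<and> sim l' l \<longrightarrow> l' = l"
    using re unfolding regular_equiv_def by (elim conjE) assumption
  have eq_iff: "\<forall>l l'. D l = D l' \<longleftrightarrow> sim l l'"
    using dim unfolding dimension_function_def by (elim conjE) assumption
  have le_iff: "\<forall>l l'. D l \<le> D l' \<longleftrightarrow> le_sim sim l l'"
    using dim unfolding dimension_function_def by (elim conjE) assumption
  have "le_sim sim x l"
    using \<open>equivp sim\<close> \<open>x < l\<close> unfolding le_sim_def by (metis equivp_reflp less_imp_le)
  then have "D x \<le> D l"
    using le_iff by blast
  moreover have "\<not> sim x l"
    using antisym \<open>x < l\<close> by (auto simp: less_le)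
  then have "D x \<noteq> D l"
    using eq_iff by blast
  ultimately show ?thesis by simp
qed

text \<open>A strictly monotone map with finite range into a linear order forbids infinite
  descending chains: the number of values below \<open>f l\<close> strictly decreases.\<close>
lemma wfp_less_if_strict_mono_finite_range:
  fixes f :: "'a::order \<Rightarrow> 'b::linorder"
  assumes fin: "finite (range f)" and mono: "\<And>x y. x < y \<Longrightarrow> f x < f y"
  shows "wfp ((<) :: 'a \<Rightarrow> 'a \<Rightarrow> bool)"
proof (rule wfp_if_convertible_to_nat)
  fix x y :: 'a
  assume "x < y"
  then have "{v \<in> range f. v < f x} \<subset> {v \<in> range f. v < f y}"
    using mono[OF \<open>x < y\<close>] by auto
  then show "card {v \<in> range f. v < f x} < card {v \<in> range f. v < f y}"
    using fin by (intro psubset_card_mono) auto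
qed

lemma times_self_lepoll_infinite:
  assumes "infinite B"
  shows "B \<times> B \<lesssim> B"
proof -
  have "B \<times> B \<approx> B"
    using assms by (simp add: eqpoll_iff_card_of_ordIso card_of_Times_same_infinite)
  then show ?thesis
    by (rule eqpoll_imp_lepoll)
qed

lemma nlists_lepoll_infinite:
  assumes inf: "infinite B"
  shows "{xs. set xs \<subseteq> B \<and> length xs = k} \<lesssim> B"
proof (induction k)
  case 0
  obtain b where "b \<in> B"
    using inf by (metis ex_in_conv finite.emptyI)
  then have "{[]} \<lesssim> B"
    unfolding lepoll_def by (intro exI[of _ "\<lambda>_. b"]) simp
  moreover have "{xs. set xs \<subseteq> B \<and> length xs = 0} = {[]}"
    by auto
  ultimately show ?case by simp
next
  case (Suc k)
  let ?N = "{xs. set xs \<subseteq> B \<and> length xs = k}"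
  have "{xs. set xs \<subseteq> B \<and> length xs = Suc k} \<subseteq> (\<lambda>(x, xs). x # xs) ` (B \<times> ?N)"
  proof
    fix xs assume "xs \<in> {xs. set xs \<subseteq> B \<and> length xs = Suc k}"
    then obtain y ys where "xs = y # ys" "y \<in> B" "ys \<in> ?N"
      by (cases xs) auto
    then show "xs \<in> (\<lambda>(x, xs). x # xs) ` (B \<times> ?N)" by force
  qed
  then have "{xs. set xs \<subseteq> B \<and> length xs = Suc k} \<lesssim> B \<times> ?N"
    by (meson image_lepoll lepoll_trans subset_imp_lepoll)
  also have "B \<times> ?N \<lesssim> B \<times> B"
    using Suc.IH by (simp add: times_lepoll_mono lepoll_refl)
  also have "B \<times> B \<lesssim> B"
    using inf by (rule times_self_lepoll_infinite)
  finally show ?case .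
qed

text \<open>All finite lists over an infinite \<open>B\<close>: tag each list with its length, which
  embeds \<open>lists B\<close> into \<open>\<nat> \<times> B \<lesssim> B \<times> B \<lesssim> B\<close>.\<close>
lemma lists_lepoll_infinite:
  assumes inf: "infinite B"
  shows "lists B \<lesssim> B"
proof -
  define N where "N k = {xs. set xs \<subseteq> B \<and> length xs = k}" for k
  have "\<forall>k. \<exists>g. inj_on g (N k) \<and> g ` N k \<subseteq> B"
    using nlists_lepoll_infinite[OF inf] unfolding lepoll_def N_def by blast
  then obtain f where f: "\<forall>k. inj_on (f k) (N k) \<and> f k ` N k \<subseteq> B"
    by (rule choice[THEN exE])
  have N_length: "xs \<in> N (length xs)" if "xs \<in> lists B" for xs
    using that by (auto simp: N_def)
  let ?tag = "\<lambda>xs. (length xs, f (length xs) xs)"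
  have "inj_on ?tag (lists B)"
  proof (rule inj_onI)
    fix xs ys assume xs: "xs \<in> lists B" and ys: "ys \<in> lists B" and eq: "?tag xs = ?tag ys"
    then have "length xs = length ys" by simp
    then show "xs = ys"
      using eq f N_length[OF xs] N_length[OF ys] by (metis inj_onD prod.inject)
  qed
  moreover have "?tag ` lists B \<subseteq> (UNIV :: nat set) \<times> B"
    using f N_length by (auto simp: image_subset_iff)
  ultimately have "lists B \<lesssim> (UNIV :: nat set) \<times> B"
    unfolding lepoll_def by blast
  also have "(UNIV :: nat set) \<times> B \<lesssim> B \<times> B"
    using inf infinite_le_lepoll times_lepoll_mono lepoll_refl by blast
  also have "B \<times> B \<lesssim> B"
    using inf by (rule times_self_lepoll_infinite)
  finally show ?thesis .
qed

text \<open>An infinite set covered by the images of the finite subsets of \<open>M\<close> under some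
  map is no larger than \<open>M\<close>: first \<open>M\<close> must be infinite, and then
  \<open>A \<lesssim> Fpow M \<lesssim> lists M \<lesssim> M\<close>.\<close>
lemma lepoll_if_covered_by_Fpow:
  assumes cover: "A \<subseteq> g ` Fpow M" and inf: "infinite A"
  shows "A \<lesssim> M"
proof -
  have A_Fpow: "A \<lesssim> Fpow M"
    using cover by (meson image_lepoll lepoll_trans subset_imp_lepoll)
  have "(UNIV :: nat set) \<lesssim> A"
    using inf infinite_le_lepoll by blast
  then have "infinite (Fpow M)"
    using A_Fpow infinite_le_lepoll lepoll_trans by blast
  then have "infinite M"
    by (meson Fpow_subset_Pow finite_Pow_iff finite_subset)
  have "Fpow M \<subseteq> set ` lists M"
  proof
    fix F assume "F \<in> Fpow M"
    then obtain xs where "set xs = F" "F \<subseteq> M"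
      unfolding Fpow_def using finite_list by blast
    then show "F \<in> set ` lists M" by auto
  qed
  note A_Fpow
  also have "Fpow M \<lesssim> lists M"
    using \<open>Fpow M \<subseteq> set ` lists M\<close> by (meson image_lepoll lepoll_trans subset_imp_lepoll)
  also have "lists M \<lesssim> M"
    using \<open>infinite M\<close> by (rule lists_lepoll_infinite)
  finally show ?thesis .
qed

theorem mainTheorem5:
  fixes perp :: "'a::complete_lattice \<Rightarrow> 'a" and n :: nat
  assumes "factorial_W_lattice_type_I perp n"
  shows "(minimal_elems :: 'a set) \<approx> (UNIV :: real set)"
proof -
  from assms obtain sim D where ol: "ortho_lattice perp"
    and re: "regular_equiv perp sim" and dim: "dimension_function sim D"
    and range_D: "range D = {real k / real n | k. k \<le> n}"
    and size: "(UNIV :: 'a set) \<approx> (UNIV :: real set)"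
    unfolding factorial_W_lattice_type_I_def factorial_R_lattice_type_I_def R_lattice_def
    by blast
  have "finite (range D)"
    unfolding range_D by (simp add: Setcompr_eq_image)
  then have dcc: "wfp ((<) :: 'a \<Rightarrow> 'a \<Rightarrow> bool)"
    by (rule wfp_less_if_strict_mono_finite_range) (rule dimension_strict_mono[OF re dim])
  have rel_compl: "\<exists>y. x \<squnion> y = l \<and> x \<sqinter> y = bot" if "x \<le> l" for x l :: 'a
    using ortho_relative_complement[OF ol that] by blast
  have "\<exists>F. finite F \<and> F \<subseteq> minimal_elems \<and> Sup F = l" for l :: 'a
    by (rule finite_join_of_minimal_elems[OF rel_compl dcc])
  then have "(UNIV :: 'a set) \<subseteq> Sup ` Fpow minimal_elems"
    unfolding Fpow_def by (metis (mono_tags, lifting) image_eqI mem_Collect_eq subsetI)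
  moreover have "infinite (UNIV :: 'a set)"
    using size eqpoll_finite_iff infinite_UNIV_char_0 by blast
  ultimately have "(UNIV :: 'a set) \<lesssim> (minimal_elems :: 'a set)"
    by (rule lepoll_if_covered_by_Fpow)
  then have "(minimal_elems :: 'a set) \<approx> (UNIV :: 'a set)"
    by (rule lepoll_antisym[OF subset_imp_lepoll[OF subset_UNIV]])
  then show ?thesis
    using size by (rule eqpoll_trans)
qed

end
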